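(* With the sequence $(f^{(k)},g^{(k)})_{k\ge0}$, $d_k$ and $\Delta_k$ defined as in the context, for every $k\ge 0$: (A) if $k$ is even then $\Delta_k=0$, and if $k$ is odd then $\Delta_k=1$ and $d_k=1$; (B) $(f^{(k+1)},g^{(k+1)})=(f^{(k)},\,z\,g^{(k)})$ if $k$ is even, and $(f^{(k+1)},g^{(k+1)})=(x f^{(k)}+g^{(k)},\,z f^{(k)})$ if $k$ is odd; (C) $|f^{(k+1)}|=\lfloor (k+3)/2\rfloor$; (D) $f^{(k+1)}(0,1)=g^{(k+1)}(0,1)=1$.
   Context: $\mathbb{F}=\mathrm{GF}(2)$, $R=\mathbb{F}[x,z]$, $|\cdot|$ is total degree. Let $(r_0,r_1,\ldots)$ be the binary sequence with $r_i=1$ if $i=2^j-1$ for some $j\ge 0$ and $r_i=0$ otherwise, i.e. $(1,1,0,1,0,0,0,1,0^7,1,\ldots)$. For $n\ge1$ its inverse form is $R^{(1-n)}=\sum_{j=1-n}^{0}r_{-j}\,x^{j}z^{1-n-j}\in\mathbb{F}[x^{-1},z^{-1}]$, a homogeneous Laurent form of degree $1-n$. For a form $f\in R$ and such a form $G$, $\Delta(f;G)$ is the coefficient of $x^{|f|+|G|}z^0$ in the product $f\cdot G$ computed in $\mathbb{F}[x^{\pm1},z^{\pm1}]$ if $|f|+|G|\le 0$, and $0$ otherwise. Define forms recursively: $(f^{(0)},g^{(0)})=(x+z,z)$; for $k\ge0$ let $d_k=|g^{(k)}|-|f^{(k)}|$ and $\Delta_k=\Delta(f^{(k)};R^{(-1-k)})$,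 and set $(f^{(k+1)},g^{(k+1)})=(f^{(k)},zg^{(k)})$ if $\Delta_k=0$; $=(f^{(k)}+x^{-d_k}g^{(k)},\,zg^{(k)})$ if $\Delta_k=1$ and $d_k\le0$; $=(x^{d_k}f^{(k)}+g^{(k)},\,zf^{(k)})$ if $\Delta_k=1$ and $d_k>0$. *)

theory Defs
  imports Main
begin

text \<open>Laurent polynomials in two variables x, z over GF(2), represented by their
coefficient function: a form f is a map (i,j) \<mapsto> coefficient of
x^i z^j, with True standing for 1 and False for 0. All forms used have finite support;
elements of R = F[x,z] have support in the nonnegative quadrant.\<close>

type_synonym lform = "int \<times> int \<Rightarrow> bool"

definition ladd :: "lform \<Rightarrow> lform \<Rightarrow> lform" where
  "ladd f g = (\<lambda>m. f m \<noteq> g m)"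

definition lmul :: "lform \<Rightarrow> lform \<Rightarrow> lform" where
  "lmul f g = (\<lambda>(i, j). odd (card {(a, b). f a \<and> g b \<and> fst a + fst b = i \<and> snd a + snd b = j}))"

definition lmon :: "int \<Rightarrow> int \<Rightarrow> lform" where
  "lmon i j = (\<lambda>m. m = (i, j))"

definition tdeg :: "lform \<Rightarrow> int" where
  "tdeg f = Max {i + j | i j. f (i, j)}"

text \<open>Evaluation of a polynomial (nonnegative exponents) at a point (u,v) of GF(2)^2,
with 0^0 = 1.\<close>
definition leval :: "lform \<Rightarrow> bool \<Rightarrow> bool \<Rightarrow> bool" where
  "leval f u v = odd (card {(a, b). f (a, b) \<and> (u \<or> a = 0) \<and> (v \<or> b = 0)})"

definition rseq :: "nat \<Rightarrow> bool" where
  "rseq i = (\<exists>j::nat. i = 2 ^ j - 1)"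

text \<open>Inverse form R^(1-n) = sum_{j=1-n}^0 r_{-j} x^j z^(1-n-j).\<close>
definition Rinv :: "nat \<Rightarrow> lform" where
  "Rinv n = (\<lambda>(j, e). 1 - int n \<le> j \<and> j \<le> 0 \<and> e = 1 - int n - j \<and> rseq (nat (- j)))"

definition Delta :: "lform \<Rightarrow> lform \<Rightarrow> bool" where
  "Delta f G = (if tdeg f + tdeg G \<le> 0 then lmul f G (tdeg f + tdeg G, 0) else False)"

definition dk :: "lform \<times> lform \<Rightarrow> int" where
  "dk p = tdeg (snd p) - tdeg (fst p)"

text \<open>Delta_k = Delta(f^(k); R^(-1-k)), i.e. n = k+2.\<close>
definition Deltak :: "nat \<Rightarrow> lform \<times> lform \<Rightarrow> bool" where
  "Deltak k p = Delta (fst p) (Rinv (k + 2))"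

definition step :: "nat \<Rightarrow> lform \<times> lform \<Rightarrow> lform \<times> lform" where
  "step k p = (let f = fst p; g = snd p; d = dk p in
     if \<not> Deltak k p then (f, lmul (lmon 0 1) g)
     else if d \<le> 0 then (ladd f (lmul (lmon (- d) 0) g), lmul (lmon 0 1) g)
     else (ladd (lmul (lmon d 0) f) g, lmul (lmon 0 1) f))"

primrec fg :: "nat \<Rightarrow> lform \<times> lform" where
  "fg 0 = (ladd (lmon 1 0) (lmon 0 1), lmon 0 1)"
| "fg (Suc k) = step k (fg k)"

end

theory Submission
  imports Defs "HOL-Computational_Algebra.Formal_Power_Series" "HOL-Library.Z2"
begin

text \<open>
  A form of degree \<open>d\<close> is the homogenisation \<open>x^d p(z/x)\<close> of a power series \<open>p\<close> over
  GF(2) of degree at most \<open>d\<close>, and \<open>Delta(f; R^(1-N))\<close> becomes the coefficient of \<open>z^N\<close>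
  in \<open>p T\<close>, where \<open>T = \<Sum>j. z^(2^j)\<close>; in characteristic 2, \<open>T^2 + T = z\<close>.
  The algorithm runs through the denominators \<open>P_n\<close> of the convergents \<open>Q_n / P_n\<close> of \<open>T\<close>,
  \<open>P_(n+2) = P_(n+1) + z^2 P_n\<close>, and their norm identity
  \<open>z P_n^2 + P_n Q_n + Q_n^2 = z^(2n+1)\<close> factors as \<open>(P_n T + Q_n) (P_n T + Q_n + P_n)\<close>
  with a unit second factor. So \<open>P_n T\<close> agrees with \<open>Q_n\<close> (of degree \<open>\<le> n\<close>) below
  degree \<open>2n+1\<close> and has coefficient 1 there: this gives \<open>Delta_(2n) = 0\<close> and
  \<open>Delta_(2n+1) = 1\<close>, and hence the alternation of the two update rules.
\<close>

unbundle fps_syntax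

lemma bit_fps_two [simp]: "(2::bit fps) = 0"
  by (rule fps_ext) (simp add: numeral_fps_const)

lemma bit_fps_add_add_self: "(a::bit fps) + b + a = b"
  by (simp add: ac_simps)

lemma sum_bit_symmetric:
  fixes h :: "nat \<Rightarrow> bit"
  assumes "\<And>i. i \<le> n \<Longrightarrow> h (n - i) = h i"
  shows "(\<Sum>i=0..n. h i) = (if even n then h (n div 2) else 0)"
proof -
  define A where "A = {i. i \<le> n \<and> 2*i < n}"
  define B where "B = {i. i \<le> n \<and> 2*i > n}"
  define C where "C = {i. i \<le> n \<and> 2*i = n}"
  have "{0..n} = A \<union> B \<union> C" and "A \<inter> B = {}" "(A \<union> B) \<inter> C = {}"
    unfolding A_def B_def C_def by auto
  moreover have "finite A" "finite B" "finite C"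
    unfolding A_def B_def C_def by auto
  ultimately have "(\<Sum>i=0..n. h i) = sum h A + sum h B + sum h C"
    by (simp add: sum.union_disjoint)
  moreover have "sum h B = sum h A"
  proof -
    have "B = (\<lambda>i. n - i) ` A"
    proof (intro equalityI subsetI)
      fix x assume "x \<in> B"
      then show "x \<in> (\<lambda>i. n - i) ` A"
        unfolding A_def B_def by (intro image_eqI[where x="n - x"]) auto
    qed (auto simp: A_def B_def)
    moreover have "inj_on (\<lambda>i. n - i) A"
      unfolding A_def by (auto simp: inj_on_def)
    ultimately have "sum h B = sum (\<lambda>i. h (n - i)) A"
      by (simp add: sum.reindex)
    also have "\<dots> = sum h A"
      using assms unfolding A_def by (intro sum.cong) auto
    finally show ?thesis .
  qed
  moreover have "C = (if even n then {n div 2} else {})"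
    unfolding C_def by auto
  ultimately show ?thesis by auto
qed

lemma fps_square_nth_bit: "((f::bit fps) * f) $ n = (if even n then f $ (n div 2) else 0)"
proof -
  have "(f * f) $ n = (\<Sum>i=0..n. f $ i * f $ (n - i))"
    by (rule fps_mult_nth)
  also have "\<dots> = (if even n then f $ (n div 2) * f $ (n - n div 2) else 0)"
    by (rule sum_bit_symmetric) (simp add: mult.commute)
  also have "\<dots> = (if even n then f $ (n div 2) else 0)"
    by (auto elim!: evenE)
  finally show ?thesis .
qed

definition pow2_series :: "bit fps" where
  "pow2_series = Abs_fps (\<lambda>n. of_bool (\<exists>j. n = 2 ^ j))"

lemma pow2_series_nth: "pow2_series $ n = of_bool (\<exists>j. n = 2 ^ j)"
  by (simp add: pow2_series_def)

lemma pow2_series_nth_0 [simp]: "pow2_series $ 0 = 0"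
  by (simp add: pow2_series_nth)

lemma odd_eq_power_of_two_iff: "odd (n::nat) \<Longrightarrow> (\<exists>j. n = 2 ^ j) \<longleftrightarrow> n = 1"
  by (metis even_power odd_pos power_0 zero_less_iff_neq_zero even_numeral)

lemma double_eq_power_of_two_iff:
  assumes "(k::nat) > 0"
  shows "(\<exists>j. 2 * k = 2 ^ j) \<longleftrightarrow> (\<exists>j. k = 2 ^ j)"
proof
  assume "\<exists>j. 2 * k = 2 ^ j"
  then obtain j where j: "2 * k = (2::nat) ^ j" by blast
  with assms obtain i where "j = Suc i" by (cases j) auto
  with j show "\<exists>j. k = 2 ^ j" by auto
next
  assume "\<exists>j. k = 2 ^ j"
  then show "\<exists>j. 2 * k = 2 ^ j" by (metis power_Suc)
qed

lemma pow2_series_quadratic: "pow2_series * pow2_series + pow2_series = fps_X"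
proof (rule fps_ext)
  fix n
  show "(pow2_series * pow2_series + pow2_series) $ n = fps_X $ n"
  proof (cases "even n")
    case True
    then obtain k where k: "n = 2 * k" by blast
    then show ?thesis
      using double_eq_power_of_two_iff[of k]
      by (cases "k = 0") (simp_all add: fps_square_nth_bit fps_X_def pow2_series_nth)
  next
    case False
    then show ?thesis
      using odd_eq_power_of_two_iff[of n] by (simp add: fps_square_nth_bit fps_X_def pow2_series_nth)
  qed
qed

fun conv_den :: "nat \<Rightarrow> bit fps" where
  "conv_den 0 = 1"
| "conv_den (Suc 0) = 1 + fps_X"
| "conv_den (Suc (Suc n)) = conv_den (Suc n) + fps_X^2 * conv_den n"

fun conv_num :: "nat \<Rightarrow> bit fps" where
  "conv_num 0 = 0"
| "conv_num (Suc 0) = fps_X"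
| "conv_num (Suc (Suc n)) = conv_num (Suc n) + fps_X^2 * conv_num n"

lemma conv_det: "conv_den n * conv_num (Suc n) + conv_den (Suc n) * conv_num n = fps_X^(2*n+1)"
proof (induction n)
  case 0
  then show ?case by simp
next
  case (Suc n)
  have "conv_den (Suc n) * conv_num (Suc (Suc n)) + conv_den (Suc (Suc n)) * conv_num (Suc n)
      = fps_X^2 * (conv_den n * conv_num (Suc n) + conv_den (Suc n) * conv_num n)"
    by (simp add: algebra_simps)
  also have "\<dots> = fps_X^(2 * Suc n + 1)"
    by (simp add: Suc power_add[symmetric])
  finally show ?case .
qed

lemma conv_norm:
  "fps_X * conv_den n ^ 2 + conv_den n * conv_num n + conv_num n ^ 2 = fps_X^(2*n+1)"
proof (induction n rule: conv_den.induct)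
  case 1
  then show ?case by simp
next
  case 2
  then show ?case by (simp add: algebra_simps power2_eq_square)
next
  case (3 n)
  let ?P = "conv_den (Suc n)" and ?P' = "conv_den n"
  let ?Q = "conv_num (Suc n)" and ?Q' = "conv_num n"
  have "fps_X * conv_den (Suc (Suc n)) ^ 2 + conv_den (Suc (Suc n)) * conv_num (Suc (Suc n))
          + conv_num (Suc (Suc n)) ^ 2
      = (fps_X * ?P^2 + ?P * ?Q + ?Q^2) + fps_X^4 * (fps_X * ?P'^2 + ?P' * ?Q' + ?Q'^2)
          + fps_X^2 * (?P' * ?Q + ?P * ?Q')"
    by (simp add: algebra_simps power2_eq_square power_numeral_reduce)
  also have "\<dots> = fps_X^(2*n+3) + fps_X^4 * fps_X^(2*n+1) + fps_X^2 * fps_X^(2*n+1)"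
  proof -
    have "2 * Suc n + 1 = 2*n+3" by simp
    with 3 conv_det[of n] show ?thesis by (simp only:)
  qed
  also have "\<dots> = fps_X^(2*n+3) + fps_X^(2*n+5) + fps_X^(2*n+3)"
  proof -
    have "fps_X^4 * fps_X^(2*n+1) = (fps_X::bit fps)^(2*n+5)"
      unfolding power_add[symmetric] by (rule arg_cong[where f = "power fps_X"]) simp
    moreover have "fps_X^2 * fps_X^(2*n+1) = (fps_X::bit fps)^(2*n+3)"
      unfolding power_add[symmetric] by (rule arg_cong[where f = "power fps_X"]) simp
    ultimately show ?thesis by (simp only:)
  qed
  also have "\<dots> = fps_X^(2*n+5)"
    by (rule bit_fps_add_add_self)
  also have "2*n+5 = 2 * Suc (Suc n) + 1"
    by simp
  finally show ?case .
qed

lemma conv_den_nth_0 [simp]: "conv_den n $ 0 = 1"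
  by (induction n rule: conv_den.induct) simp_all

lemma conv_num_nth_0 [simp]: "conv_num n $ 0 = 0"
  by (induction n rule: conv_num.induct) simp_all

lemma conv_den_nth_above: "n < j \<Longrightarrow> conv_den n $ j = 0"
  by (induction n arbitrary: j rule: conv_den.induct) (auto simp: fps_X_power_mult_nth fps_X_nth)

lemma conv_num_nth_above: "n < j \<Longrightarrow> conv_num n $ j = 0"
  by (induction n arbitrary: j rule: conv_num.induct) (auto simp: fps_X_power_mult_nth fps_X_nth)

lemma conv_den_nth_self: "conv_den n $ n = 1"
  by (induction n rule: conv_den.induct) (auto simp: fps_X_power_mult_nth fps_X_nth conv_den_nth_above)

lemma conv_error_nth:
  assumes "j \<le> 2*n+1"
  shows "(conv_den n * pow2_series) $ j = of_bool (j = 2*n+1) + conv_num n $ j"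
proof -
  define E where "E = conv_den n * pow2_series + conv_num n"
  define U where "U = E + conv_den n"
  have "E * U = conv_den n ^ 2 * (pow2_series * pow2_series + pow2_series)
                + (conv_den n * conv_num n + conv_num n ^ 2)"
    unfolding E_def U_def by (simp add: algebra_simps power2_eq_square)
  also have "\<dots> = fps_X^(2*n+1)"
    unfolding pow2_series_quadratic using conv_norm[of n] by (simp add: algebra_simps)
  finally have EU: "E * U = fps_X^(2*n+1)" .
  have U0: "U $ 0 = 1"
    unfolding U_def E_def by simp
  have "E = E * (U * inverse U)"
    using inverse_mult_eq_1'[of U] U0 by simp
  also have "\<dots> = fps_X^(2*n+1) * inverse U"
    by (simp add: EU mult.assoc[symmetric])
  finally have "E = fps_X^(2*n+1) * inverse U" .
  then have "E $ j = (if j < 2*n+1 then 0 else inverse U $ (j - (2*n+1)))"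
    by (simp only: fps_X_power_mult_nth)
  then have "E $ j = of_bool (j = 2*n+1)"
    using U0 assms by auto
  moreover have "E $ j = (conv_den n * pow2_series) $ j + conv_num n $ j"
    unfolding E_def by simp
  ultimately show ?thesis
    by (metis add_diff_cancel minus_bit_def)
qed

lemma conv_den_pow2_series_nth_odd: "(conv_den n * pow2_series) $ (2*n+1) = 1"
  using conv_error_nth[of "2*n+1" n] conv_num_nth_above[of n "2*n+1"] by simp

lemma conv_den_pow2_series_nth_even: "n \<ge> 1 \<Longrightarrow> (conv_den n * pow2_series) $ (2*n) = 0"
  using conv_error_nth[of "2*n" n] conv_num_nth_above[of n "2*n"] by simp

text \<open>\<open>hform d p\<close> is the form \<open>x^d p(z/x)\<close> of degree \<open>d\<close>; only the coefficients
  \<open>p_0, \<dots>, p_d\<close> are seen.\<close>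

definition hform :: "nat \<Rightarrow> bit fps \<Rightarrow> lform" where
  "hform d p = (\<lambda>(i, j). 0 \<le> i \<and> 0 \<le> j \<and> i + j = int d \<and> p $ nat j = 1)"

definition fps_deg_le :: "nat \<Rightarrow> bit fps \<Rightarrow> bool" where
  "fps_deg_le d p \<longleftrightarrow> (\<forall>j>d. p $ j = 0)"

lemma fps_deg_le_conv_den: "fps_deg_le n (conv_den n)"
  unfolding fps_deg_le_def using conv_den_nth_above by blast

lemma fps_deg_le_X_mult: "fps_deg_le d p \<Longrightarrow> fps_deg_le (Suc d) (fps_X * p)"
  unfolding fps_deg_le_def by auto

lemma lmul_lmon: "lmul (lmon u v) f = (\<lambda>(i, j). f (i - u, j - v))"
proof (rule ext, clarify)
  fix i j
  have "{(a, b). lmon u v a \<and> f b \<and> fst a + fst b = i \<and> snd a + snd b = j}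
      = (if f (i - u, j - v) then {((u, v), (i - u, j - v))} else {})"
    by (auto simp: lmon_def)
  then show "lmul (lmon u v) f (i, j) = f (i - u, j - v)"
    unfolding lmul_def by simp
qed

lemma lmul_z_hform: "lmul (lmon 0 1) (hform d p) = hform (Suc d) (fps_X * p)"
proof (rule ext, clarify)
  fix i j :: int
  show "lmul (lmon 0 1) (hform d p) (i, j) = hform (Suc d) (fps_X * p) (i, j)"
    unfolding lmul_lmon hform_def
    by (cases "j \<ge> 1") (auto simp: nat_diff_distrib')
qed

lemma lmul_x_hform:
  assumes "fps_deg_le d p"
  shows "lmul (lmon 1 0) (hform d p) = hform (Suc d) p"
proof (rule ext, clarify)
  fix i j :: int
  have "p $ nat j = 0" if "int d < j"
    using assms that unfolding fps_deg_le_def by simp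
  then show "lmul (lmon 1 0) (hform d p) (i, j) = hform (Suc d) p (i, j)"
    unfolding lmul_lmon hform_def by (cases "i = 0") auto
qed

lemma ladd_hform: "ladd (hform d p) (hform d q) = hform d (p + q)"
proof -
  have "((a::bit) + b = 1) \<longleftrightarrow> ((a = 1) \<noteq> (b = 1))" for a b
    by (cases a; cases b) simp_all
  then show ?thesis
    by (intro ext) (auto simp: ladd_def hform_def)
qed

lemma tdeg_hform:
  assumes "p $ j = 1" "j \<le> d"
  shows "tdeg (hform d p) = int d"
proof -
  have "hform d p (int d - int j, int j)"
    using assms by (simp add: hform_def)
  then have "int d \<in> {i + j | i j. hform d p (i, j)}"
    by force
  then have "{i + j | i j. hform d p (i, j)} = {int d}"
    by (auto simp: hform_def)
  then show ?thesis
    unfolding tdeg_def by simp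
qed

lemma leval_hform:
  assumes "fps_deg_le d p"
  shows "leval (hform d p) False True \<longleftrightarrow> p $ d = 1"
proof -
  have "{(a, b). hform d p (a, b) \<and> (False \<or> a = 0) \<and> (True \<or> b = 0)}
      = (if p $ d = 1 then {(0, int d)} else {})"
    by (auto simp: hform_def)
  then show ?thesis
    unfolding leval_def by simp
qed

lemma tdeg_Rinv:
  assumes "N \<ge> 1"
  shows "tdeg (Rinv N) = 1 - int N"
proof -
  have "rseq 0"
    unfolding rseq_def by (intro exI[of _ 0]) simp
  then have "Rinv N (0, 1 - int N)"
    using assms by (simp add: Rinv_def)
  then have "1 - int N \<in> {i + j | i j. Rinv N (i, j)}"
    by force
  then have "{i + j | i j. Rinv N (i, j)} = {1 - int N}"
    by (auto simp: Rinv_def)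
  then show ?thesis
    unfolding tdeg_def by simp
qed

lemma rseq_iff_pow2_series: "rseq m \<longleftrightarrow> pow2_series $ Suc m = 1"
proof -
  have "(\<exists>j. m = 2 ^ j - 1) \<longleftrightarrow> (\<exists>j. Suc m = 2 ^ j)"
    by (metis Suc_pred' add_diff_cancel_left' plus_1_eq_Suc zero_less_power pos2)
  then show ?thesis
    unfolding rseq_def pow2_series_nth by simp
qed

lemma of_nat_bit: "(of_nat n :: bit) = of_bool (odd n)"
  by (induction n) auto

lemma fps_mult_nth_bit_card:
  "((p::bit fps) * q) $ N = of_bool (odd (card {j \<in> {0..N}. p $ j = 1 \<and> q $ (N - j) = 1}))"
proof -
  have "(p * q) $ N = (\<Sum>j=0..N. if p $ j = 1 \<and> q $ (N - j) = 1 then 1 else 0)"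
    unfolding fps_mult_nth by (intro sum.cong) auto
  also have "\<dots> = of_nat (card {j \<in> {0..N}. p $ j = 1 \<and> q $ (N - j) = 1})"
    by (simp flip: sum.inter_filter)
  finally show ?thesis
    by (simp only: of_nat_bit)
qed

text \<open>A term \<open>x^(d-j) z^j\<close> of the form pairs with the term \<open>x^(1-N+j) z^(-j)\<close> of \<open>Rinv N\<close>,
  whose coefficient is \<open>r_(N-1-j) = T_(N-j)\<close>.\<close>

lemma lmul_hform_Rinv:
  assumes deg: "fps_deg_le d p" and dN: "d < N"
  shows "lmul (hform d p) (Rinv N) (int d + 1 - int N, 0)
           \<longleftrightarrow> odd (card {j \<in> {0..N}. p $ j = 1 \<and> pow2_series $ (N - j) = 1})"
proof -
  define J where "J = {j \<in> {0..N}. p $ j = 1 \<and> pow2_series $ (N - j) = 1}"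
  define S where "S = {(a, b). hform d p a \<and> Rinv N b
                          \<and> fst a + fst b = int d + 1 - int N \<and> snd a + snd b = 0}"
  define pair where "pair = (\<lambda>j::nat. ((int d - int j, int j), (1 - int N + int j, - int j)))"
  have "S = pair ` J"
  proof (intro equalityI subsetI)
    fix x assume "x \<in> S"
    then obtain i jj j' e where x: "x = ((i, jj), (j', e))"
      and h: "hform d p (i, jj)" "Rinv N (j', e)" "i + j' = int d + 1 - int N" "jj + e = 0"
      unfolding S_def by auto
    define j where "j = nat jj"
    have jj: "jj = int j" and pj: "p $ j = 1"
      using h(1) unfolding j_def hform_def by auto
    have R: "j' \<le> 0" "e = 1 - int N - j'" "rseq (nat (- j'))"
      using h(2) unfolding Rinv_def by auto
    have j': "j' = 1 - int N + int j"
      using R(2) h(4) jj by simp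
    with R(1) have jN: "j < N"
      by simp
    with j' R(3) have "pow2_series $ (N - j) = 1"
      using rseq_iff_pow2_series[of "N - 1 - j"] by (simp add: nat_diff_distrib Suc_diff_Suc)
    with pj jN have "j \<in> J"
      unfolding J_def by simp
    moreover have "x = pair j"
      using x h jj j' unfolding pair_def hform_def by auto
    ultimately show "x \<in> pair ` J"
      by blast
  next
    fix x assume "x \<in> pair ` J"
    then obtain j where x: "x = pair j" and j: "j \<le> N" "p $ j = 1" "pow2_series $ (N - j) = 1"
      unfolding J_def by auto
    have jd: "j \<le> d"
      using j(2) deg unfolding fps_deg_le_def by (metis not_le one_neq_zero)
    then have "rseq (N - 1 - j)"
      using j(3) dN rseq_iff_pow2_series[of "N - 1 - j"] by (simp add: Suc_diff_Suc)
    then have "Rinv N (1 - int N + int j, - int j)"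
      using jd dN unfolding Rinv_def by (simp add: nat_diff_distrib)
    moreover have "hform d p (int d - int j, int j)"
      using jd j unfolding hform_def by simp
    ultimately show "x \<in> S"
      unfolding S_def x pair_def by simp
  qed
  moreover have "inj_on pair J"
    unfolding pair_def inj_on_def by auto
  ultimately have "card S = card J"
    by (simp add: card_image)
  then show ?thesis
    unfolding lmul_def S_def J_def by simp
qed

lemma Delta_hform_Rinv:
  assumes deg: "fps_deg_le d p" and "p $ j = 1" "j \<le> d" and dN: "d < N"
  shows "Delta (hform d p) (Rinv N) \<longleftrightarrow> (p * pow2_series) $ N = 1"
proof -
  have "tdeg (hform d p) + tdeg (Rinv N) = int d + 1 - int N"
    using tdeg_hform[of p j d] tdeg_Rinv[of N] assms by simp
  moreover have "int d + 1 - int N \<le> 0"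
    using dN by simp
  ultimately show ?thesis
    using lmul_hform_Rinv[OF deg dN] unfolding Delta_def fps_mult_nth_bit_card by simp
qed

lemma step_if_not_Deltak: "\<not> Deltak k p \<Longrightarrow> step k p = (fst p, lmul (lmon 0 1) (snd p))"
  unfolding step_def by simp

lemma step_if_Deltak:
  "Deltak k p \<Longrightarrow> dk p = 1
     \<Longrightarrow> step k p = (ladd (lmul (lmon 1 0) (fst p)) (snd p), lmul (lmon 0 1) (fst p))"
  unfolding step_def Let_def by simp

definition even_stage :: "nat \<Rightarrow> lform \<times> lform" where
  "even_stage n = (hform (Suc n) (conv_den (Suc n)), hform (Suc n) (fps_X * conv_den n))"

definition odd_stage :: "nat \<Rightarrow> lform \<times> lform" where
  "odd_stage n = (hform (Suc n) (conv_den (Suc n)), hform (Suc (Suc n)) (fps_X^2 * conv_den n))"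

lemma tdeg_hform_conv_den: "tdeg (hform n (conv_den n)) = int n"
  by (rule tdeg_hform[where j = 0]) simp_all

lemma leval_hform_conv_den: "leval (hform n (conv_den n)) False True"
  using leval_hform[OF fps_deg_le_conv_den] conv_den_nth_self by simp

lemma leval_hform_X_mult_conv_den: "leval (hform (Suc n) (fps_X * conv_den n)) False True"
  using leval_hform[OF fps_deg_le_X_mult[OF fps_deg_le_conv_den]] conv_den_nth_self by simp

lemma leval_hform_X2_mult_conv_den: "leval (hform (Suc (Suc n)) (fps_X^2 * conv_den n)) False True"
  using leval_hform[OF fps_deg_le_X_mult[OF fps_deg_le_X_mult[OF fps_deg_le_conv_den]]]
    conv_den_nth_self by (simp add: power2_eq_square mult.assoc)

lemma Deltak_hform_conv_den:
  assumes "n < k + 1"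
  shows "Deltak k (hform (Suc n) (conv_den (Suc n)), g)
           \<longleftrightarrow> (conv_den (Suc n) * pow2_series) $ (k + 2) = 1"
  unfolding Deltak_def using assms
  by (simp add: Delta_hform_Rinv[OF fps_deg_le_conv_den, where j = 0])

lemma not_Deltak_even_stage: "\<not> Deltak (2*n) (even_stage n)"
  using conv_den_pow2_series_nth_even[of "Suc n"]
  by (simp add: even_stage_def Deltak_hform_conv_den)

lemma Deltak_odd_stage: "Deltak (2*n+1) (odd_stage n)"
  using conv_den_pow2_series_nth_odd[of "Suc n"]
  by (simp add: odd_stage_def Deltak_hform_conv_den)

lemma dk_odd_stage: "dk (odd_stage n) = 1"
proof -
  have "tdeg (hform (Suc (Suc n)) (fps_X^2 * conv_den n)) = int (Suc (Suc n))"
    by (rule tdeg_hform[where j = "Suc (Suc n)"]) (simp_all add: fps_X_power_mult_nth conv_den_nth_self)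
  then show ?thesis
    unfolding dk_def odd_stage_def by (simp add: tdeg_hform_conv_den)
qed

lemma step_even_stage: "step (2*n) (even_stage n) = odd_stage n"
  using step_if_not_Deltak[OF not_Deltak_even_stage]
  by (simp add: even_stage_def odd_stage_def lmul_z_hform power2_eq_square mult.assoc)

lemma step_odd_stage: "step (2*n+1) (odd_stage n) = even_stage (Suc n)"
  using step_if_Deltak[OF Deltak_odd_stage dk_odd_stage]
  by (simp add: odd_stage_def even_stage_def lmul_x_hform[OF fps_deg_le_conv_den] lmul_z_hform ladd_hform)

lemma fg_0: "fg 0 = even_stage 0"
proof -
  have "ladd (lmon 1 0) (lmon 0 1) = hform 1 (conv_den 1)"
    by (auto simp: ladd_def lmon_def hform_def fps_X_nth nat_eq_iff fun_eq_iff)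
  moreover have "lmon 0 1 = hform 1 (fps_X * conv_den 0)"
    by (auto simp: lmon_def hform_def fps_X_nth nat_eq_iff fun_eq_iff)
  ultimately show ?thesis
    unfolding even_stage_def by simp
qed

lemma fg_stages: "fg (2*n) = even_stage n \<and> fg (2*n+1) = odd_stage n"
proof (induction n)
  case 0
  then show ?case
    using fg_0 step_even_stage[of 0] by simp
next
  case (Suc n)
  then have "fg (2 * Suc n) = even_stage (Suc n)"
    using step_even_stage[of n] step_odd_stage[of n] by simp
  then show ?case
    using step_even_stage[of "Suc n"] by simp
qed

theorem theorem4:
  fixes k :: nat
  shows "(even k \<longrightarrow> \<not> Deltak k (fg k)) \<and> (odd k \<longrightarrow> Deltak k (fg k) \<and> dk (fg k) = 1)
    \<and> (even k \<longrightarrow> fg (Suc k) = (fst (fg k), lmul (lmon 0 1) (snd (fg k))))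
    \<and> (odd k \<longrightarrow> fg (Suc k) = (ladd (lmul (lmon 1 0) (fst (fg k))) (snd (fg k)), lmul (lmon 0 1) (fst (fg k))))
    \<and> tdeg (fst (fg (Suc k))) = int ((k + 3) div 2)
    \<and> leval (fst (fg (Suc k))) False True \<and> leval (snd (fg (Suc k))) False True"
proof (cases "even k")
  case True
  then obtain n where k: "k = 2*n"
    by blast
  have fg: "fg k = even_stage n" "fg (Suc k) = odd_stage n"
    using fg_stages[of n] k by (simp_all del: fg.simps)
  have D: "\<not> Deltak k (fg k)"
    unfolding fg(1) using not_Deltak_even_stage[of n] k by simp
  moreover have "fg (Suc k) = (fst (fg k), lmul (lmon 0 1) (snd (fg k)))"
    using step_if_not_Deltak[OF D] by simp
  moreover have "tdeg (fst (fg (Suc k))) = int ((k + 3) div 2)"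
    "leval (fst (fg (Suc k))) False True" "leval (snd (fg (Suc k))) False True"
    unfolding fg(2) odd_stage_def using k
    by (simp_all add: tdeg_hform_conv_den leval_hform_conv_den leval_hform_X2_mult_conv_den)
  ultimately show ?thesis
    using True by blast
next
  case False
  then obtain n where k: "k = 2*n+1"
    by (blast elim: oddE)
  have fg: "fg k = odd_stage n" "fg (Suc k) = even_stage (Suc n)"
    using fg_stages[of n] fg_stages[of "Suc n"] k by (simp_all del: fg.simps)
  have D: "Deltak k (fg k)" "dk (fg k) = 1"
    unfolding fg(1) using Deltak_odd_stage[of n] dk_odd_stage[of n] k by simp_all
  moreover have "fg (Suc k)
      = (ladd (lmul (lmon 1 0) (fst (fg k))) (snd (fg k)), lmul (lmon 0 1) (fst (fg k)))"
    using step_if_Deltak[OF D] by simp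
  moreover have "tdeg (fst (fg (Suc k))) = int ((k + 3) div 2)"
    "leval (fst (fg (Suc k))) False True" "leval (snd (fg (Suc k))) False True"
    unfolding fg(2) even_stage_def using k
    by (simp_all add: tdeg_hform_conv_den leval_hform_conv_den leval_hform_X_mult_conv_den
        del: conv_den.simps)
  ultimately show ?thesis
    using False by blast
qed

end
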